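(* In the setting of the context, let $i\in\{1,\dots,n\}$ and let $(x_1,y_1)$, $(x_2,y_2)$ be two distinct elements of $\mathfrak{X}_i$ with $0<y_1\le y_2$. Then $$\frac{y_2}{y_1}\ge \frac{1}{2Y_S+7/3}\max\big(1,|\beta_i(x_1,y_1)-m(x_1,y_1)|\big).$$
   Context: Setting: $n\ge3$; $F(x,y)=\sum_{i=0}^s a_ix^{n_i}y^{n-n_i}\in\mathbb{Z}[x,y]$ of degree $n$, irreducible over $\mathbb{Q}$, all $a_i\neq0$, $0=n_0<\dots<n_s=n$, discriminant $D$. $R=n^{800\log^2n}$; $h$ a positive integer and $\kappa>1$ an integer with $h\le |D|^{\frac{1}{2(n-1)(2+1/\kappa)}}/\big((3R)^{n/2}(ns)^{2s+n}\big)$; $Y_S=e^6s(ns)^{2s/n}h^{1/(\kappa n)}$. Write $F(x,y)=a\prod_{i=1}^n(x-\alpha_iy)$ ($\alpha_i$ the roots of $F(x,1)$) and $L_i(x,y)=x-\alpha_iy$. A "solution" is a pair $(x,y)\in\mathbb{Z}^2$ with $\gcd(x,y)=1$ and $1\le|F(x,y)|\le h$, with $(x,y)$ and $(-x,-y)$ identified. Assume there is a solution with $0\le y\le Y_S$, and fix one such, $(x_0,y_0)$, with $y_0\ge0$ minimal. Index the roots so that $|L_1(x_0,y_0)|=\min_i|L_i(x_0,y_0)|$. There is at most one solution $(x^*,y^* )$ with $0<y^*\le Y_S$ and $|L_1(x^*,y^* )|<1/(2Y_S)$; let $\mathbf{A}=\{(x_0,y_0)\}$ together with $(x^*,y^*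 )$ if it exists. For a primitive $(x,y)$ choose integers $x',y'$ with $x'y-xy'=1$ and set $\beta_j(x,y)=-L_j(x',y')/L_j(x,y)$ for $j=1,\dots,n$ (so that $F(ux+wx',uy+wy')=F(x,y)\prod_j(u-\beta_j(x,y)w)$), and let $m(x,y)$ be an integer with $|\mathrm{Re}\,\beta_1(x,y)-m(x,y)|\le 1/2$. For $1\le i\le n$, $\mathfrak{X}_i$ is the set of solutions $(x,y)\notin\mathbf{A}$ with $1\le y\le Y_S$ and $|L_i(x,y)|\le\frac{1}{2y}$. *)

theory Defs
  imports Complex_Main "HOL-Computational_Algebra.Polynomial"
begin

definition Fh :: "int poly \<Rightarrow> int \<Rightarrow> int \<Rightarrow> int" where
  "Fh f x y = (\<Sum>k\<le>degree f. coeff f k * x ^ k * y ^ (degree f - k))"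

definition sterms :: "int poly \<Rightarrow> nat" where
  "sterms f = card {k. coeff f k \<noteq> 0} - 1"

definition disc_roots :: "int poly \<Rightarrow> (nat \<Rightarrow> complex) \<Rightarrow> complex" where
  "disc_roots f \<alpha> = of_int (lead_coeff f) ^ (2 * degree f - 2) *
     (\<Prod>i\<in>{1..degree f}. \<Prod>j\<in>{i<..degree f}. (\<alpha> i - \<alpha> j)^2)"

definition RR :: "nat \<Rightarrow> real" where
  "RR n = real n powr (800 * (ln (real n))^2)"

definition YS :: "nat \<Rightarrow> nat \<Rightarrow> int \<Rightarrow> int \<Rightarrow> real" where
  "YS n s h \<kappa> = exp 6 * real s * (real n * real s) powr (2 * real s / real n)
                  * real_of_int h powr (1 / (real_of_int \<kappa> * real n))"

definition Lf :: "(nat \<Rightarrow> complex) \<Rightarrow> nat \<Rightarrow> int \<Rightarrow> int \<Rightarrow> complex" where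
  "Lf \<alpha> j x y = of_int x - \<alpha> j * of_int y"

text \<open>beta_j(x,y) = - L_j(x',y') / L_j(x,y), for a chosen completion (x',y') with x'y - xy' = 1.\<close>
definition beta :: "(nat \<Rightarrow> complex) \<Rightarrow> nat \<Rightarrow> int \<Rightarrow> int \<Rightarrow> int \<Rightarrow> int \<Rightarrow> complex" where
  "beta \<alpha> j x y x' y' = - Lf \<alpha> j x' y' / Lf \<alpha> j x y"

definition is_sol :: "int poly \<Rightarrow> int \<Rightarrow> int \<Rightarrow> int \<Rightarrow> bool" where
  "is_sol f h x y \<longleftrightarrow> coprime x y \<and> 1 \<le> \<bar>Fh f x y\<bar> \<and> \<bar>Fh f x y\<bar> \<le> h"

definition setA :: "int poly \<Rightarrow> int \<Rightarrow> (nat \<Rightarrow> complex) \<Rightarrow> real \<Rightarrow> int \<Rightarrow> int \<Rightarrow> (int \<times> int) set" where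
  "setA f h \<alpha> Y x0 y0 = {(x0, y0)} \<union>
     {(x, y). is_sol f h x y \<and> 0 < y \<and> real_of_int y \<le> Y \<and> cmod (Lf \<alpha> 1 x y) < 1 / (2 * Y)}"

definition setX :: "int poly \<Rightarrow> int \<Rightarrow> (nat \<Rightarrow> complex) \<Rightarrow> real \<Rightarrow> int \<Rightarrow> int \<Rightarrow> nat \<Rightarrow> (int \<times> int) set" where
  "setX f h \<alpha> Y x0 y0 i = {(x, y). is_sol f h x y \<and> (x, y) \<notin> setA f h \<alpha> Y x0 y0 \<and>
      1 \<le> y \<and> real_of_int y \<le> Y \<and> cmod (Lf \<alpha> i x y) \<le> 1 / (2 * real_of_int y)}"

end

theory Submission
  imports Defs
begin

(* For two distinct primitive solutions the integer x2 y1 - x1 y2 is nonzero and equals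
   y1 L_i(x2,y2) - y2 L_i(x1,y1); since |L_i(x2,y2)| <= 1/(2 y2), this forces
   y2 |L_i(x1,y1)| >= 1/2.  On the other hand beta_j(x1,y1) + y1'/y1 = -1/(y1 L_j(x1,y1))
   for every j, so beta_i and beta_1 both lie near the real number -y1'/y1.  As (x1,y1) is
   not in A we have |L_1(x1,y1)| >= 1/(2 Y_S), and m is within 1/2 of Re beta_1; together
   |beta_i - m| <= (2 y2 + 2 Y_S + y1/2) / y1.  The case y1 = y2 = 1 cannot occur: two
   distinct integers within 1/2 of alpha_i would make alpha_i their midpoint, a rational
   root of the irreducible F(x,1). *)

lemma irreducible_field_poly_no_root:
  fixes g :: "'a::field poly"
  assumes "irreducible g" and "degree g \<ge> 2"
  shows "poly g q \<noteq> 0"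
proof
  assume "poly g q = 0"
  then obtain k where g: "g = [:-q, 1:] * k"
    by (auto simp: poly_eq_0_iff_dvd elim: dvdE)
  have "k \<noteq> 0" using g assms(2) by auto
  have "\<not> is_unit [:-q, 1:]" by (simp add: is_unit_iff_degree)
  then have "is_unit k" using irreducibleD[OF assms(1) g] by blast
  then have "degree k = 0" using \<open>k \<noteq> 0\<close> by (simp add: is_unit_iff_degree)
  moreover have "degree g = 1 + degree k"
    unfolding g using \<open>k \<noteq> 0\<close> by (subst degree_mult_eq) auto
  ultimately have "degree g = 1" by simp
  then show False using assms(2) by simp
qed

lemma int_poly_root_not_rat:
  fixes f :: "int poly"
  assumes "irreducible (map_poly rat_of_int f)" and "degree f \<ge> 2"
    and "poly (map_poly complex_of_int f) z = 0"
  shows "z \<notin> \<rat>"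
proof
  assume "z \<in> \<rat>"
  then obtain q where z: "z = of_rat q" by (elim Rats_cases)
  have "poly (map_poly complex_of_int f) (of_rat q) = of_rat (poly (map_poly rat_of_int f) q)"
    by (simp add: poly_altdef degree_map_poly coeff_map_poly of_rat_sum of_rat_mult of_rat_power)
  then have "poly (map_poly rat_of_int f) q = 0"
    using assms(3) z by simp
  then show False
    using irreducible_field_poly_no_root[OF assms(1)] assms(2) by (simp add: degree_map_poly)
qed

lemma Lf_neq_0_if_not_rat:
  assumes "\<alpha> j \<notin> \<rat>" and "y \<noteq> 0"
  shows "Lf \<alpha> j x y \<noteq> 0"
proof
  assume "Lf \<alpha> j x y = 0"
  then have "\<alpha> j = of_int x / of_int y" using assms(2) by (simp add: Lf_def field_simps)
  then show False using assms(1) by simp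
qed

lemma coprime_pairs_cross_neq_0:
  fixes x1 y1 x2 y2 :: int
  assumes "coprime x1 y1" "coprime x2 y2" "0 < y1" "0 < y2" "(x1, y1) \<noteq> (x2, y2)"
  shows "x2 * y1 - x1 * y2 \<noteq> 0"
proof
  assume "x2 * y1 - x1 * y2 = 0"
  then have e: "x2 * y1 = x1 * y2" by simp
  then have "y1 dvd y2" "y2 dvd y1" using assms(1,2)
    by (metis coprime_commute coprime_dvd_mult_right_iff dvd_triv_right)+
  then have "y1 = y2" using assms(3,4) by (simp add: zdvd_antisym_nonneg)
  then show False using e assms(3,5) by simp
qed

lemma one_le_cross_Lf:
  fixes x1 y1 x2 y2 :: int
  assumes "x2 * y1 - x1 * y2 \<noteq> 0" "0 \<le> y1" "0 \<le> y2"
  shows "1 \<le> y1 * cmod (Lf \<alpha> j x2 y2) + y2 * cmod (Lf \<alpha> j x1 y1)"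
proof -
  have cross: "complex_of_int (x2 * y1 - x1 * y2) = of_int y1 * Lf \<alpha> j x2 y2 - of_int y2 * Lf \<alpha> j x1 y1"
    by (simp add: Lf_def algebra_simps)
  have "1 \<le> \<bar>real_of_int (x2 * y1 - x1 * y2)\<bar>" using assms(1) by linarith
  also have "\<dots> = cmod (of_int y1 * Lf \<alpha> j x2 y2 - of_int y2 * Lf \<alpha> j x1 y1)"
    unfolding cross[symmetric] by (rule norm_of_int[symmetric])
  also have "\<dots> \<le> cmod (of_int y1 * Lf \<alpha> j x2 y2) + cmod (of_int y2 * Lf \<alpha> j x1 y1)"
    by (rule norm_triangle_ineq4)
  also have "\<dots> = y1 * cmod (Lf \<alpha> j x2 y2) + y2 * cmod (Lf \<alpha> j x1 y1)"
    using assms(2,3) by (simp add: norm_mult)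
  finally show ?thesis .
qed

lemma Lf_gap_principle:
  fixes x1 y1 x2 y2 :: int
  assumes "coprime x1 y1" and "coprime x2 y2" and "(x1, y1) \<noteq> (x2, y2)"
    and "0 < y1" and "y1 \<le> y2" and "cmod (Lf \<alpha> j x2 y2) \<le> 1 / (2 * real_of_int y2)"
  shows "1 / 2 \<le> y2 * cmod (Lf \<alpha> j x1 y1)"
proof -
  have "x2 * y1 - x1 * y2 \<noteq> 0" using coprime_pairs_cross_neq_0 assms(1-5) by simp
  then have "1 \<le> y1 * cmod (Lf \<alpha> j x2 y2) + y2 * cmod (Lf \<alpha> j x1 y1)"
    using assms(4,5) by (intro one_le_cross_Lf) auto
  moreover have "y1 * cmod (Lf \<alpha> j x2 y2) \<le> y2 * cmod (Lf \<alpha> j x2 y2)"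
    using assms(5) by (intro mult_right_mono) auto
  moreover have "y2 * cmod (Lf \<alpha> j x2 y2) \<le> 1 / 2"
    using assms(4-6) by (simp add: field_simps)
  ultimately show ?thesis by linarith
qed

lemma norm_beta_add_quotient:
  assumes "x' * y - x * y' = 1" and "Lf \<alpha> j x y \<noteq> 0" and "0 < y"
  shows "cmod (beta \<alpha> j x y x' y' + of_int y' / of_int y) = 1 / (y * cmod (Lf \<alpha> j x y))"
proof -
  have "complex_of_int (x' * y - x * y') = 1" using assms(1) by simp
  then have "Lf \<alpha> j x' y' * of_int y = 1 + of_int y' * Lf \<alpha> j x y"
    unfolding Lf_def by (simp add: algebra_simps)
  then have "beta \<alpha> j x y x' y' + of_int y' / of_int y = - 1 / (of_int y * Lf \<alpha> j x y)"
    unfolding beta_def using assms(2,3) by (simp add: field_simps)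
  then show ?thesis using assms(3) by (simp add: norm_divide norm_mult)
qed

lemma norm_beta_sub_int_le:
  fixes m :: int
  assumes "x' * y - x * y' = 1" and "0 < y" and "Lf \<alpha> j x y \<noteq> 0" and "Lf \<alpha> k x y \<noteq> 0"
    and "\<bar>Re (beta \<alpha> k x y x' y') - m\<bar> \<le> 1 / 2"
  shows "cmod (beta \<alpha> j x y x' y' - of_int m)
           \<le> 1 / (y * cmod (Lf \<alpha> j x y)) + 1 / (y * cmod (Lf \<alpha> k x y)) + 1 / 2"
proof -
  define u where "u = real_of_int y' / real_of_int y"
  have u: "complex_of_int y' / complex_of_int y = of_real u" by (simp add: u_def)
  note shifted_j = norm_beta_add_quotient[OF assms(1,3,2), unfolded u]
  note shifted_k = norm_beta_add_quotient[OF assms(1,4,2), unfolded u]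
  have "\<bar>u + m\<bar> = \<bar>Re (beta \<alpha> k x y x' y' + of_real u) - (Re (beta \<alpha> k x y x' y') - m)\<bar>"
    by simp
  also have "\<dots> \<le> cmod (beta \<alpha> k x y x' y' + of_real u) + 1 / 2"
    using abs_Re_le_cmod[of "beta \<alpha> k x y x' y' + of_real u"] assms(5) by linarith
  finally have um: "\<bar>u + m\<bar> \<le> 1 / (y * cmod (Lf \<alpha> k x y)) + 1 / 2"
    unfolding shifted_k .
  have "cmod (beta \<alpha> j x y x' y' - of_int m)
          = cmod ((beta \<alpha> j x y x' y' + of_real u) - of_real (u + m))" by simp
  also have "\<dots> \<le> cmod (beta \<alpha> j x y x' y' + of_real u) + cmod (of_real (u + m) :: complex)"
    by (rule norm_triangle_ineq4)
  also have "\<dots> = 1 / (y * cmod (Lf \<alpha> j x y)) + \<bar>u + m\<bar>"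
    by (simp only: shifted_j norm_of_real)
  finally show ?thesis using um by linarith
qed

lemma midpoint_if_norm_diff_le:
  fixes u v z :: complex
  assumes "cmod (u - z) \<le> r" and "cmod (v - z) \<le> r" and "2 * r \<le> cmod (u - v)"
  shows "z = (u + v) / 2"
proof -
  have "r \<ge> 0" using assms(1) norm_ge_zero order_trans by blast
  have parallelogram:
    "(cmod (u - z))\<^sup>2 + (cmod (v - z))\<^sup>2 = 2 * (cmod (z - (u + v) / 2))\<^sup>2 + (cmod (u - v))\<^sup>2 / 2"
    unfolding cmod_power2 by (simp add: power2_eq_square field_simps)
  have "(cmod (u - z))\<^sup>2 \<le> r\<^sup>2" "(cmod (v - z))\<^sup>2 \<le> r\<^sup>2"
    using assms(1,2) by (simp_all add: power_mono)
  moreover have "4 * r\<^sup>2 \<le> (cmod (u - v))\<^sup>2"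
    using power_mono[OF assms(3), of 2] \<open>r \<ge> 0\<close> by (simp add: power_mult_distrib)
  ultimately
  have "(cmod (z - (u + v) / 2))\<^sup>2 \<le> 0" using parallelogram by linarith
  then show ?thesis by simp
qed

lemma ints_near_non_rat_eq:
  assumes "z \<notin> \<rat>" and "cmod (of_int x1 - z) \<le> 1 / 2" and "cmod (of_int x2 - z) \<le> 1 / 2"
  shows "x1 = x2"
proof (rule ccontr)
  assume "x1 \<noteq> x2"
  then have "1 \<le> \<bar>real_of_int (x1 - x2)\<bar>" by linarith
  then have "2 * (1 / 2) \<le> cmod (of_int x1 - of_int x2 :: complex)"
    unfolding of_int_diff[symmetric] norm_of_int by simp
  then have "z = (of_int x1 + of_int x2) / 2" using midpoint_if_norm_diff_le assms(2,3) by blast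
  also have "\<dots> \<in> \<rat>" by (intro Rats_divide Rats_add Rats_of_int) simp
  finally show False using assms(1) by blast
qed

lemma setX_D:
  assumes "(x, y) \<in> setX f h \<alpha> Y x0 y0 i"
  shows "is_sol f h x y" and "real_of_int y \<le> Y"
    and "cmod (Lf \<alpha> i x y) \<le> 1 / (2 * real_of_int y)" and "1 / (2 * Y) \<le> cmod (Lf \<alpha> 1 x y)"
  using assms unfolding setX_def setA_def by auto

lemma ratio_lower_bound:
  fixes y1 y2 Y a c B :: real
  assumes "1 \<le> y1" and "y1 \<le> y2" and "2 \<le> y2" and "y1 \<le> Y"
    and "1 / 2 \<le> y2 * a" and "1 / (2 * Y) \<le> c"
    and "B \<le> 1 / (y1 * a) + 1 / (y1 * c) + 1 / 2"
  shows "1 / (2 * Y + 7 / 3) * max 1 B \<le> y2 / y1"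
proof -
  have "0 < y2 * a" using assms(5) by linarith
  then have "0 < a" using assms(3) by (simp add: zero_less_mult_iff)
  have "0 < Y" using assms(1,4) by linarith
  then have "0 < 1 / (2 * Y)" by simp
  then have "0 < c" using assms(6) by linarith
  have "1 / a \<le> 2 * y2" using assms(5) \<open>0 < a\<close> by (simp add: field_simps)
  then have "1 / (y1 * a) \<le> 2 * y2 / y1"
    using divide_right_mono[of "1 / a" "2 * y2" y1] assms(1) by (simp add: mult.commute)
  moreover have "1 / c \<le> 2 * Y" using assms(6) \<open>0 < c\<close> \<open>0 < Y\<close> by (simp add: field_simps)
  then have "1 / (y1 * c) \<le> 2 * Y / y1"
    using divide_right_mono[of "1 / c" "2 * Y" y1] assms(1) by (simp add: mult.commute)
  moreover have "2 * y2 / y1 + 2 * Y / y1 + 1 / 2 \<le> (2 * Y + 7 / 3) * (y2 / y1)"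
  proof -
    have "2 * (y2 - 1) \<le> 2 * Y * (y2 - 1)"
      using assms(1-4) by (intro mult_right_mono) auto
    then have "2 * y2 + 2 * Y + y1 / 2 \<le> (2 * Y + 7 / 3) * y2"
      using assms(2,3) by (simp add: algebra_simps)
    then have "(2 * y2 + 2 * Y + y1 / 2) / y1 \<le> (2 * Y + 7 / 3) * y2 / y1"
      using assms(1) by (intro divide_right_mono) auto
    then show ?thesis using assms(1) by (simp add: add_divide_distrib)
  qed
  ultimately have "B \<le> (2 * Y + 7 / 3) * (y2 / y1)" using assms(7) by linarith
  moreover have "1 \<le> (2 * Y + 7 / 3) * (y2 / y1)"
  proof -
    have "1 \<le> y2 / y1" using assms(1,2) by simp
    moreover have "1 \<le> 2 * Y + 7 / 3" using \<open>0 < Y\<close> by simp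
    ultimately show ?thesis using mult_mono[of 1 "2 * Y + 7 / 3" 1 "y2 / y1"] by simp
  qed
  ultimately have "max 1 B \<le> (2 * Y + 7 / 3) * (y2 / y1)" by simp
  moreover have "0 < 2 * Y + 7 / 3" using assms(1,4) by simp
  ultimately show ?thesis by (simp add: pos_divide_le_eq mult.commute)
qed

theorem lemma4p3:
  fixes f :: "int poly" and \<alpha> :: "nat \<Rightarrow> complex" and h \<kappa> x0 y0 :: int
    and i :: nat and x1 y1 x2 y2 x1' y1' m :: int
  defines "n \<equiv> degree f"
  defines "s \<equiv> sterms f"
  defines "D \<equiv> disc_roots f \<alpha>"
  defines "Y \<equiv> YS (degree f) (sterms f) h \<kappa>"
  assumes n3: "n \<ge> 3"
    and irr: "irreducible (map_poly rat_of_int f)"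
    and c0: "coeff f 0 \<noteq> 0"
    and roots: "map_poly complex_of_int f
                  = smult (of_int (lead_coeff f)) (\<Prod>j\<in>{1..n}. [:- \<alpha> j, 1:])"
    and h_pos: "h \<ge> 1" and kappa: "\<kappa> > 1"
    and h_bound: "real_of_int h \<le> cmod D powr (1 / (2 * (real n - 1) * (2 + 1 / real_of_int \<kappa>)))
                     / ((3 * RR n) powr (real n / 2) * (real n * real s) powr (real (2 * s + n)))"
    and sol0: "is_sol f h x0 y0" "0 \<le> y0" "real_of_int y0 \<le> Y"
    and min0: "\<And>x y. is_sol f h x y \<Longrightarrow> 0 \<le> y \<Longrightarrow> y0 \<le> y"
    and idx: "\<And>j. j \<in> {1..n} \<Longrightarrow> cmod (Lf \<alpha> 1 x0 y0) \<le> cmod (Lf \<alpha> j x0 y0)"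
    and i: "i \<in> {1..n}"
    and X1: "(x1, y1) \<in> setX f h \<alpha> Y x0 y0 i"
    and X2: "(x2, y2) \<in> setX f h \<alpha> Y x0 y0 i"
    and dist: "(x1, y1) \<noteq> (x2, y2)"
    and y12: "0 < y1" "y1 \<le> y2"
    and compl: "x1' * y1 - x1 * y1' = 1"
    and m: "\<bar>Re (beta \<alpha> 1 x1 y1 x1' y1') - real_of_int m\<bar> \<le> 1 / 2"
  shows "real_of_int y2 / real_of_int y1 \<ge>
           1 / (2 * Y + 7 / 3) * max 1 (cmod (beta \<alpha> i x1 y1 x1' y1' - of_int m))"
proof -
  have n_ge_2: "degree f \<ge> 2" using n3 n_def by simp
  have not_rat: "\<alpha> j \<notin> \<rat>" if "j \<in> {1..n}" for j
  proof (rule int_poly_root_not_rat[OF irr n_ge_2])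
    show "poly (map_poly complex_of_int f) (\<alpha> j) = 0"
      using that unfolding roots by (auto simp: poly_prod prod_zero_iff)
  qed
  note X1_facts = setX_D[OF X1] and X2_facts = setX_D[OF X2]
  have "y2 \<ge> 2"
  proof (rule ccontr)
    assume "\<not> y2 \<ge> 2"
    then have "y1 = 1" "y2 = 1" using y12 by auto
    then have "x1 = x2"
      using ints_near_non_rat_eq[OF not_rat[OF i]] X1_facts(3) X2_facts(3) by (simp add: Lf_def)
    then show False using dist \<open>y1 = 1\<close> \<open>y2 = 1\<close> by simp
  qed
  have gap: "1 / 2 \<le> y2 * cmod (Lf \<alpha> i x1 y1)"
    using X1_facts(1) X2_facts(1,3) dist y12 unfolding is_sol_def by (intro Lf_gap_principle) auto
  have beta_bound: "cmod (beta \<alpha> i x1 y1 x1' y1' - of_int m)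
      \<le> 1 / (y1 * cmod (Lf \<alpha> i x1 y1)) + 1 / (y1 * cmod (Lf \<alpha> 1 x1 y1)) + 1 / 2"
    using n3 i y12 not_rat
    by (intro norm_beta_sub_int_le[OF compl _ _ _ m] Lf_neq_0_if_not_rat) auto
  have y_bounds: "1 \<le> real_of_int y1" "real_of_int y1 \<le> real_of_int y2" "2 \<le> real_of_int y2"
    using y12 \<open>y2 \<ge> 2\<close> by simp_all
  show ?thesis
    by (rule ratio_lower_bound[OF y_bounds X1_facts(2) gap X1_facts(4) beta_bound])
qed

end
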